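(* Let $n\ge 1$ and let $\omega_1,\dots,\omega_n\in\mathbb{C}$ be pairwise distinct complex numbers, none of which lies on the real segment $[0,1]$. Let $n_1,\dots,n_n\ge 1$ be integers and set $h(\omega)=\prod_{i=1}^{n}(\omega-\omega_i)^{n_i}$. For a nonnegative integer $m$ define $$g_m(\omega)=\omega^m\Big(\log\big(1-\tfrac{1}{\omega}\big)+\sum_{k=1}^{m}\frac{1}{k\,\omega^k}\Big),\qquad G_m(\omega)=\frac{g_m(\omega)}{h(\omega)},$$ where $\log$ denotes the principal branch of the logarithm (so that $g_m$, and hence $G_m$ away from the zeros of $h$, is single-valued and holomorphic on $\mathbb{C}\setminus[0,1]$). Then $$\int_0^1 \frac{x^m}{h(x)}\,dx=\sum_{i=1}^{n}\operatorname{Res}\big(G_m,\omega_i\big).$$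
   Context: $\operatorname{Res}(G,\omega_i)$ denotes the residue of the meromorphic function $G$ at the point $\omega_i$. The empty sum (for $m=0$) is $0$. *)

theory Defs
  imports "HOL-Complex_Analysis.Complex_Analysis"
begin

definition hpoly :: "nat \<Rightarrow> (nat \<Rightarrow> complex) \<Rightarrow> (nat \<Rightarrow> nat) \<Rightarrow> complex \<Rightarrow> complex" where
  "hpoly n w k z = (\<Prod>i=1..n. (z - w i) ^ k i)"

definition gfun :: "nat \<Rightarrow> complex \<Rightarrow> complex" where
  "gfun m z = z ^ m * (Ln (1 - 1 / z) + (\<Sum>j=1..m. 1 / (of_nat j * z ^ j)))"

definition Gfun :: "nat \<Rightarrow> (nat \<Rightarrow> complex) \<Rightarrow> (nat \<Rightarrow> nat) \<Rightarrow> nat \<Rightarrow> complex \<Rightarrow> complex" where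
  "Gfun n w k m z = gfun m z / hpoly n w k z"

end

theory Submission
  imports Defs
begin

text \<open>For \<open>\<omega>\<close> off \<open>[0,1]\<close>, \<open>g\<^sub>m(\<omega>) = \<integral>\<^sub>0\<^sup>1 x\<^sup>m / (x - \<omega>) dx\<close>: an explicit primitive of the integrand
  involves \<open>Ln (1 - x/\<omega>)\<close>, which is holomorphic along \<open>[0,1]\<close>. Hence
  \<open>G\<^sub>m(\<omega>) = \<integral>\<^sub>0\<^sup>1 \<psi>\<^sub>x(\<omega>) dx\<close> with \<open>\<psi>\<^sub>x(\<omega>) = x\<^sup>m / ((x - \<omega>) h(\<omega>))\<close>. Writing \<open>Res(G\<^sub>m, \<omega>\<^sub>i)\<close> as an
  integral over a small circle and exchanging the two integrals gives
  \<open>Res(G\<^sub>m, \<omega>\<^sub>i) = \<integral>\<^sub>0\<^sup>1 Res(\<psi>\<^sub>x, \<omega>\<^sub>i) dx\<close>. Finally, \<open>1/h\<close> vanishes at infinity, so the residue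
  theorem on a large circle shows that all residues of \<open>\<psi>\<^sub>x\<close> add up to zero; the only pole
  besides the \<open>\<omega>\<^sub>i\<close> is \<open>\<omega> = x\<close>, with residue \<open>-x\<^sup>m/h(x)\<close>.\<close>

lemma one_minus_divide_notin_nonpos_Reals:
  assumes "\<omega> \<notin> closed_segment 0 (1::complex)" "z \<in> closed_segment 0 1"
  shows "1 - z / \<omega> \<notin> \<real>\<^sub>\<le>\<^sub>0"
proof
  assume "1 - z / \<omega> \<in> \<real>\<^sub>\<le>\<^sub>0"
  then obtain t :: real where t: "t \<le> 0" "1 - z / \<omega> = of_real t"
    by (auto elim!: nonpos_Reals_cases)
  obtain u :: real where u: "0 \<le> u" "u \<le> 1" "z = of_real u"
    using assms(2) by (auto simp: in_segment scaleR_conv_of_real)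
  have "u \<noteq> 0" using t u by auto
  have "\<omega> \<noteq> 0" using assms(1) by auto
  then have "z = (1 - of_real t) * \<omega>" using t(2) by (simp add: field_simps)
  then have "\<omega> = of_real (u / (1 - t))" using u t \<open>u \<noteq> 0\<close> by (simp add: field_simps)
  moreover have "0 \<le> u / (1 - t)" "u / (1 - t) \<le> 1" using u t by (auto simp: field_simps)
  ultimately have "\<omega> \<in> closed_segment 0 1"
    by (auto simp: in_segment scaleR_conv_of_real intro!: exI[of _ "u / (1 - t)"])
  with assms(1) show False by contradiction
qed

lemma gfun_holomorphic_on:
  assumes "A \<inter> closed_segment 0 1 = {}"
  shows "gfun m holomorphic_on A"
  unfolding gfun_def
proof (intro holomorphic_intros)
  fix z assume "z \<in> A"
  then have z: "z \<notin> closed_segment 0 1" using assms by auto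
  then show "z \<noteq> 0" by auto
  show "1 - 1 / z \<notin> \<real>\<^sub>\<le>\<^sub>0" using one_minus_divide_notin_nonpos_Reals[OF z, of 1] by simp
qed (use assms in auto)

definition power_div_sub_primitive :: "nat \<Rightarrow> complex \<Rightarrow> complex \<Rightarrow> complex" where
  "power_div_sub_primitive m \<omega> z =
     (\<Sum>j<m. \<omega> ^ (m - 1 - j) * z ^ (j + 1) / of_nat (j + 1)) + \<omega> ^ m * Ln (1 - z / \<omega>)"

lemma has_field_derivative_power_div_sub_primitive:
  assumes "1 - z / \<omega> \<notin> \<real>\<^sub>\<le>\<^sub>0" "\<omega> \<noteq> 0" "z \<noteq> \<omega>"
  shows "(power_div_sub_primitive m \<omega> has_field_derivative z ^ m / (z - \<omega>)) (at z)"
proof -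
  have "((\<lambda>z. \<Sum>j<m. \<omega> ^ (m - 1 - j) * z ^ (j + 1) / of_nat (j + 1))
          has_field_derivative (\<Sum>j<m. \<omega> ^ (m - 1 - j) * z ^ j)) (at z)"
  proof (rule DERIV_sum)
    fix j
    have "(1::complex) + of_nat j \<noteq> 0" by (metis of_nat_Suc of_nat_neq_0)
    then show "((\<lambda>z. \<omega> ^ (m - 1 - j) * z ^ (j + 1) / of_nat (j + 1))
                 has_field_derivative \<omega> ^ (m - 1 - j) * z ^ j) (at z)"
      by - (rule derivative_eq_intros refl | simp)+
  qed
  moreover have "((\<lambda>z. \<omega> ^ m * Ln (1 - z / \<omega>))
      has_field_derivative \<omega> ^ m * (inverse (1 - z / \<omega>) * (- 1 / \<omega>))) (at z)"
    by (intro DERIV_cmult DERIV_chain2[where g = "\<lambda>z. 1 - z / \<omega>", OF has_field_derivative_Ln[OF assms(1)]])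
      (rule derivative_eq_intros refl | simp add: assms(2))+
  ultimately have "(power_div_sub_primitive m \<omega> has_field_derivative
      (\<Sum>j<m. \<omega> ^ (m - 1 - j) * z ^ j) + \<omega> ^ m * (inverse (1 - z / \<omega>) * (- 1 / \<omega>))) (at z)"
    unfolding power_div_sub_primitive_def by (rule DERIV_add)
  moreover have sum_eq: "(\<Sum>j<m. \<omega> ^ (m - 1 - j) * z ^ j) = (z ^ m - \<omega> ^ m) / (z - \<omega>)"
    using power_diff_sumr2[of z m \<omega>] assms(3) by (simp add: field_simps)
  moreover have Ln_eq: "\<omega> ^ m * (inverse (1 - z / \<omega>) * (- 1 / \<omega>)) = \<omega> ^ m / (z - \<omega>)"
    using assms(2,3) by (simp add: field_simps)
  ultimately show ?thesis
    unfolding sum_eq Ln_eq by (simp add: diff_divide_distrib)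
qed

lemma power_div_sub_primitive_1_minus_0:
  assumes "\<omega> \<noteq> 0"
  shows "power_div_sub_primitive m \<omega> 1 - power_div_sub_primitive m \<omega> 0 = gfun m \<omega>"
proof -
  have "\<omega> ^ m / (of_nat (Suc j) * \<omega> ^ Suc j) = \<omega> ^ (m - 1 - j) / of_nat (j + 1)" if "j < m" for j
  proof -
    have "m = (m - 1 - j) + Suc j" using that by simp
    then have "\<omega> ^ m = \<omega> ^ (m - 1 - j) * \<omega> ^ Suc j" by (metis power_add)
    then show ?thesis using assms by simp
  qed
  then have "(\<Sum>j=1..m. \<omega> ^ m / (of_nat j * \<omega> ^ j)) = (\<Sum>j<m. \<omega> ^ (m - 1 - j) / of_nat (j + 1))"
    by (simp add: sum.atLeast1_atMost_eq)
  then show ?thesis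
    unfolding power_div_sub_primitive_def gfun_def by (simp add: distrib_left sum_distrib_left)
qed

lemma gfun_has_contour_integral:
  assumes "\<omega> \<notin> closed_segment 0 (1::complex)"
  shows "((\<lambda>z. z ^ m / (z - \<omega>)) has_contour_integral gfun m \<omega>) (linepath 0 1)"
proof -
  have "\<omega> \<noteq> 0" using assms by auto
  have deriv: "(power_div_sub_primitive m \<omega> has_field_derivative z ^ m / (z - \<omega>))
      (at z within closed_segment 0 1)" if "z \<in> closed_segment 0 1" for z
  proof (rule has_field_derivative_at_within, rule has_field_derivative_power_div_sub_primitive)
    show "1 - z / \<omega> \<notin> \<real>\<^sub>\<le>\<^sub>0" using one_minus_divide_notin_nonpos_Reals[OF assms that] .
    show "z \<noteq> \<omega>" using assms that by auto
  qed fact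
  have "((\<lambda>z. z ^ m / (z - \<omega>)) has_contour_integral
      power_div_sub_primitive m \<omega> (pathfinish (linepath 0 1))
        - power_div_sub_primitive m \<omega> (pathstart (linepath 0 1))) (linepath 0 1)"
    by (rule contour_integral_primitive[OF deriv]) auto
  then show ?thesis using power_div_sub_primitive_1_minus_0[OF \<open>\<omega> \<noteq> 0\<close>] by simp
qed

lemma continuous_on_contour_integral_circlepath_param:
  assumes F: "continuous_on (U \<times> sphere c r) (\<lambda>(z, \<omega>). F z \<omega>)" and "r \<ge> 0"
  shows "continuous_on U (\<lambda>z. contour_integral (circlepath c r) (F z))"
proof -
  define d where "d t = 2 * complex_of_real pi * \<i> * complex_of_real r * exp (2 * complex_of_real pi * \<i> * complex_of_real t)" for t
  have eq: "(\<lambda>z. contour_integral (circlepath c r) (F z)) =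
      (\<lambda>z. integral (cbox 0 1) (\<lambda>t. F z (circlepath c r t) * d t))"
    by (simp add: contour_integral_integral vector_derivative_circlepath cbox_interval d_def)
  have "continuous_on (U \<times> cbox 0 1) (\<lambda>p. (fst p, circlepath c r (snd p)))"
    by (simp add: circlepath) (intro continuous_intros)
  moreover have "(\<lambda>p. (fst p, circlepath c r (snd p))) ` (U \<times> cbox 0 1) \<subseteq> U \<times> sphere c r"
    using \<open>r \<ge> 0\<close> by (auto simp: circlepath dist_norm norm_mult)
  moreover have "continuous_on (U \<times> sphere c r) (\<lambda>p. F (fst p) (snd p))"
    using F by (simp add: split_def)
  ultimately have "continuous_on (U \<times> cbox 0 1) (\<lambda>p. F (fst p) (circlepath c r (snd p)))"
    using continuous_on_compose2 by fastforce
  then have "continuous_on (U \<times> cbox 0 1) (\<lambda>(z, t). F z (circlepath c r t) * d t)"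
    unfolding split_def d_def by (intro continuous_intros)
  then show ?thesis unfolding eq by (rule integral_continuous_on_param)
qed

lemma residue_contour_integral_param:
  fixes \<phi> :: "complex \<Rightarrow> complex \<Rightarrow> complex"
  assumes "e > 0"
    and \<phi>_holo: "\<And>z. z \<in> closed_segment a b \<Longrightarrow> \<phi> z holomorphic_on ball p e - {p}"
    and \<phi>_cont: "continuous_on (closed_segment a b \<times> (ball p e - {p})) (\<lambda>(z, \<omega>). \<phi> z \<omega>)"
    and G_holo: "G holomorphic_on ball p e - {p}"
    and G_eq: "\<And>\<omega>. \<omega> \<in> ball p e - {p} \<Longrightarrow> G \<omega> = contour_integral (linepath a b) (\<lambda>z. \<phi> z \<omega>)"
  shows "((\<lambda>z. residue (\<phi> z) p) has_contour_integral residue G p) (linepath a b)"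
proof -
  define C where "C = circlepath p (e / 2)"
  have C_image: "path_image C = sphere p (e / 2)" "sphere p (e / 2) \<subseteq> ball p e - {p}"
    using \<open>e > 0\<close> by (auto simp: C_def)
  have cball: "cball p (e / 2) \<subseteq> ball p e" using \<open>e > 0\<close> by auto
  have res_G: "contour_integral C G = 2 * pi * \<i> * residue G p"
    unfolding C_def using \<open>e > 0\<close>
    by (intro contour_integral_unique base_residue[OF open_ball _ _ G_holo cball]) auto
  have res_\<phi>: "contour_integral C (\<phi> z) = 2 * pi * \<i> * residue (\<phi> z) p"
    if "z \<in> closed_segment a b" for z
    unfolding C_def using \<open>e > 0\<close>
    by (intro contour_integral_unique base_residue[OF open_ball _ _ \<phi>_holo[OF that] cball]) auto
  have cont: "continuous_on (closed_segment a b \<times> sphere p (e / 2)) (\<lambda>(z, \<omega>). \<phi> z \<omega>)"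
    by (rule continuous_on_subset[OF \<phi>_cont]) (use C_image in auto)
  have "2 * pi * \<i> * residue G p = contour_integral C G"
    by (rule res_G[symmetric])
  also have "\<dots> = contour_integral C (\<lambda>\<omega>. contour_integral (linepath a b) (\<lambda>z. \<phi> z \<omega>))"
    by (rule contour_integral_eq) (use G_eq C_image in auto)
  also have "\<dots> = contour_integral (linepath a b) (\<lambda>z. contour_integral C (\<phi> z))"
  proof (rule contour_integral_swap)
    show "continuous_on (path_image C \<times> path_image (linepath a b)) (\<lambda>(\<omega>, z). \<phi> z \<omega>)"
      using continuous_on_swap_args[OF cont] C_image by simp
  qed (auto simp: C_def vector_derivative_circlepath intro!: continuous_intros)
  finally have "((\<lambda>z. contour_integral C (\<phi> z)) has_contour_integral 2 * pi * \<i> * residue G p) (linepath a b)"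
    using continuous_on_contour_integral_circlepath_param[OF cont] \<open>e > 0\<close>
    by (metis contour_integrable_continuous_linepath has_contour_integral_integral C_def
        less_eq_real_def half_gt_zero)
  then have "((\<lambda>z. contour_integral C (\<phi> z) / (2 * pi * \<i>)) has_contour_integral residue G p) (linepath a b)"
    using has_contour_integral_div[where c = "2 * pi * \<i>"] by fastforce
  then show ?thesis
    by (rule has_contour_integral_eq) (simp add: res_\<phi>)
qed

lemma sum_residues_eq_0_if_decay:
  fixes \<phi> :: "complex \<Rightarrow> complex"
  assumes "finite P" and \<phi>_holo: "\<phi> holomorphic_on - P"
    and decay: "((\<lambda>\<omega>. \<omega> * \<phi> \<omega>) \<longlongrightarrow> 0) at_infinity"
  shows "(\<Sum>p\<in>P. residue \<phi> p) = 0"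
proof -
  define c where "c = (\<Sum>p\<in>P. residue \<phi> p)"
  obtain M where M: "\<And>p. p \<in> P \<Longrightarrow> norm p < M"
    using finite_imp_bounded[OF \<open>finite P\<close>] by (auto simp: bounded_pos_less)
  have circle: "(\<phi> has_contour_integral 2 * pi * \<i> * c) (circlepath 0 R)" if "R \<ge> M" for R
  proof -
    have image: "path_image (circlepath 0 R) \<subseteq> UNIV - P"
      using M that by (fastforce simp: path_image_circlepath)
    have "\<phi> contour_integrable_on circlepath 0 R"
      using \<phi>_holo by (intro contour_integrable_continuous_circlepath continuous_on_subset[OF _ image]
          holomorphic_on_imp_continuous_on) (simp add: Compl_eq_Diff_UNIV)
    moreover have "contour_integral (circlepath 0 R) \<phi>
        = 2 * pi * \<i> * (\<Sum>p\<in>P. winding_number (circlepath 0 R) p * residue \<phi> p)"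
      using \<phi>_holo \<open>finite P\<close>
      by (intro Residue_theorem[OF open_UNIV connected_UNIV _ _ _ _ image]) (auto simp: Compl_eq_Diff_UNIV)
    moreover have "(\<Sum>p\<in>P. winding_number (circlepath 0 R) p * residue \<phi> p) = c"
      unfolding c_def using M that
      by (intro sum.cong refl) (subst winding_number_circlepath; force)
    ultimately show ?thesis by (metis has_contour_integral_integral)
  qed
  have small: "norm c \<le> \<epsilon>" if "\<epsilon> > 0" for \<epsilon>
  proof -
    obtain b where b: "\<And>\<omega>. b \<le> norm \<omega> \<Longrightarrow> norm (\<omega> * \<phi> \<omega>) \<le> \<epsilon>"
      using decay \<open>\<epsilon> > 0\<close> unfolding tendsto_Zfun_iff Zfun_def eventually_at_infinity
      by (metis diff_zero less_eq_real_def)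
    define R where "R = max (max b M) 1"
    have R: "R \<ge> M" "R \<ge> b" "R > 0" unfolding R_def by auto
    have bound: "norm (\<phi> \<omega>) \<le> \<epsilon> / R" if "norm (\<omega> - 0) = R" for \<omega>
      using b[of \<omega>] that R by (simp add: norm_mult field_simps)
    have "norm (2 * pi * \<i> * c) \<le> \<epsilon> / R * (2 * pi * R)"
      using R \<open>\<epsilon> > 0\<close> by (intro has_contour_integral_bound_circlepath[OF circle[OF R(1)] _ _ bound]) auto
    also have "\<dots> = 2 * pi * \<epsilon>" using R by simp
    finally show ?thesis by (simp add: norm_mult)
  qed
  show ?thesis
  proof (rule ccontr)
    assume "(\<Sum>p\<in>P. residue \<phi> p) \<noteq> 0"
    then show False using small[of "norm c / 2"] by (simp add: c_def)
  qed
qed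

lemma tendsto_divide_diff_at_infinity:
  fixes z :: "'a :: real_normed_field"
  shows "((\<lambda>\<omega>. \<omega> / (z - \<omega>)) \<longlongrightarrow> - 1) at_infinity"
proof -
  have "((\<lambda>\<omega>. inverse (z * inverse \<omega> - 1)) \<longlongrightarrow> inverse (z * 0 - 1)) at_infinity"
    by (intro tendsto_intros tendsto_inverse_0) simp
  moreover have "\<forall>\<^sub>F \<omega> in at_infinity. inverse (z * inverse \<omega> - 1) = \<omega> / (z - \<omega>)"
    using eventually_not_equal_at_infinity[of 0]
    by eventually_elim (simp add: field_simps)
  ultimately show ?thesis by (simp add: tendsto_cong)
qed

lemma sum_residues_Cauchy_kernel:
  fixes f :: "complex \<Rightarrow> complex"
  assumes "finite S" "z \<notin> S" and f_holo: "f holomorphic_on - S"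
    and f_lim: "(f \<longlongrightarrow> 0) at_infinity"
  shows "(\<Sum>p\<in>S. residue (\<lambda>\<omega>. f \<omega> / (z - \<omega>)) p) = f z"
proof -
  define \<phi> where "\<phi> = (\<lambda>\<omega>. f \<omega> / (z - \<omega>))"
  have "open (- S)" using \<open>finite S\<close> by (simp add: finite_imp_closed open_Compl)
  have "((\<lambda>\<omega>. f \<omega> * (\<omega> / (z - \<omega>))) \<longlongrightarrow> 0 * - 1) at_infinity"
    by (intro tendsto_mult f_lim tendsto_divide_diff_at_infinity)
  then have "((\<lambda>\<omega>. \<omega> * \<phi> \<omega>) \<longlongrightarrow> 0) at_infinity"
    by (simp add: \<phi>_def mult.commute)
  moreover have "\<phi> holomorphic_on - insert z S"
    unfolding \<phi>_def by (intro holomorphic_intros holomorphic_on_subset[OF f_holo]) auto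
  ultimately have "(\<Sum>p\<in>insert z S. residue \<phi> p) = 0"
    using \<open>finite S\<close> by (intro sum_residues_eq_0_if_decay) auto
  moreover have "residue \<phi> z = - residue (\<lambda>\<omega>. f \<omega> / (\<omega> - z)) z"
    unfolding \<phi>_def using \<open>open (- S)\<close> \<open>z \<notin> S\<close>
    by (subst residue_neg[symmetric, of "- S"]) (auto intro!: holomorphic_intros
        holomorphic_on_subset[OF f_holo] simp: minus_divide_right)
  moreover have "residue (\<lambda>\<omega>. f \<omega> / (\<omega> - z)) z = f z"
    using \<open>open (- S)\<close> \<open>z \<notin> S\<close> by (intro residue_simple[OF _ _ f_holo]) auto
  ultimately have "(\<Sum>p\<in>S. residue \<phi> p) = f z"
    using \<open>finite S\<close> \<open>z \<notin> S\<close> by simp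
  then show ?thesis unfolding \<phi>_def .
qed

lemma hpoly_nonzero: "z \<notin> w ` {1..n} \<Longrightarrow> hpoly n w k z \<noteq> 0"
  unfolding hpoly_def by (auto simp: prod_zero_iff)

lemma hpoly_holomorphic_on [holomorphic_intros]: "hpoly n w k holomorphic_on S"
  unfolding hpoly_def by (intro holomorphic_intros)

lemma continuous_on_hpoly [continuous_intros]:
  "continuous_on S f \<Longrightarrow> continuous_on S (\<lambda>x. hpoly n w k (f x))"
  unfolding hpoly_def by (intro continuous_intros)

lemma tendsto_inverse_hpoly_at_infinity:
  assumes "n \<ge> 1" "\<And>i. i \<in> {1..n} \<Longrightarrow> k i \<ge> 1"
  shows "((\<lambda>z. inverse (hpoly n w k z)) \<longlongrightarrow> 0) at_infinity"
proof -
  have hpoly_inverse: "inverse (hpoly n w k z) = (\<Prod>i=1..n. inverse (z - w i) ^ k i)" for z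
    unfolding hpoly_def by (simp add: prod_inversef[symmetric] power_inverse comp_def)
  have lim: "((\<lambda>z. \<Prod>i=1..n. inverse (z - w i) ^ k i) \<longlongrightarrow> (\<Prod>i=1..n. 0 ^ k i)) at_infinity"
  proof (intro tendsto_intros)
    fix i
    have "filterlim (\<lambda>z. z - w i) at_infinity at_infinity"
      using tendsto_add_filterlim_at_infinity[OF tendsto_const filterlim_ident, of "- w i"]
      by (simp add: add.commute)
    then show "((\<lambda>z. inverse (z - w i)) \<longlongrightarrow> 0) at_infinity"
      by (rule filterlim_compose[OF tendsto_inverse_0])
  qed
  have zero: "(\<Prod>i=1..n. (0::complex) ^ k i) = 0"
    using assms(1) assms(2)[of 1] by (intro prod_zero bexI[of _ 1]) auto
  show ?thesis using lim unfolding hpoly_inverse zero .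
qed

lemma residue_Gfun_has_contour_integral:
  assumes "p \<notin> closed_segment 0 1"
  shows "((\<lambda>z. residue (\<lambda>\<omega>. (z ^ m / hpoly n w k \<omega>) / (z - \<omega>)) p)
           has_contour_integral residue (Gfun n w k m) p) (linepath 0 1)"
proof -
  have "\<exists>e>0. \<forall>\<omega>\<in>ball p e. \<omega> \<in> - closed_segment 0 1 \<and> (\<omega> \<noteq> p \<longrightarrow> \<omega> \<notin> w ` {1..n})"
    using assms by (intro finite_ball_avoid) auto
  then obtain e where "e > 0"
    and e: "\<And>\<omega>. \<omega> \<in> ball p e \<Longrightarrow> \<omega> \<notin> closed_segment 0 1 \<and> (\<omega> \<noteq> p \<longrightarrow> \<omega> \<notin> w ` {1..n})"
    by auto
  define B where "B = ball p e - {p}"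
  have B: "\<omega> \<notin> closed_segment 0 1" "hpoly n w k \<omega> \<noteq> 0" if "\<omega> \<in> B" for \<omega>
    using e that hpoly_nonzero unfolding B_def by auto
  show ?thesis
  proof (rule residue_contour_integral_param[where p = p, OF \<open>e > 0\<close>, folded B_def])
    show "(\<lambda>\<omega>. (z ^ m / hpoly n w k \<omega>) / (z - \<omega>)) holomorphic_on B"
      if "z \<in> closed_segment 0 1" for z
      using B that by (intro holomorphic_intros) auto
    show "continuous_on (closed_segment 0 1 \<times> B) (\<lambda>(z, \<omega>). (z ^ m / hpoly n w k \<omega>) / (z - \<omega>))"
      using B unfolding split_def by (intro continuous_intros) auto
    show "Gfun n w k m holomorphic_on B"
      unfolding Gfun_def using B by (intro holomorphic_intros gfun_holomorphic_on) auto
    show "Gfun n w k m \<omega> = contour_integral (linepath 0 1) (\<lambda>z. (z ^ m / hpoly n w k \<omega>) / (z - \<omega>))"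
      if "\<omega> \<in> B" for \<omega>
    proof -
      have "((\<lambda>z. z ^ m / (z - \<omega>) / hpoly n w k \<omega>) has_contour_integral Gfun n w k m \<omega>) (linepath 0 1)"
        unfolding Gfun_def by (intro has_contour_integral_div gfun_has_contour_integral B that)
      then show ?thesis by (simp add: contour_integral_unique field_simps)
    qed
  qed
qed

lemma sum_residues_divide_hpoly:
  assumes "n \<ge> 1" "inj_on w {1..n}" "\<And>i. i \<in> {1..n} \<Longrightarrow> k i \<ge> 1" "z \<notin> w ` {1..n}"
  shows "(\<Sum>i=1..n. residue (\<lambda>\<omega>. (c / hpoly n w k \<omega>) / (z - \<omega>)) (w i)) = c / hpoly n w k z"
proof -
  have "(\<Sum>i=1..n. residue (\<lambda>\<omega>. (c / hpoly n w k \<omega>) / (z - \<omega>)) (w i))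
      = (\<Sum>p\<in>w ` {1..n}. residue (\<lambda>\<omega>. (c / hpoly n w k \<omega>) / (z - \<omega>)) p)"
    by (rule sum.reindex_cong[OF assms(2) refl refl, symmetric])
  also have "\<dots> = c / hpoly n w k z"
  proof (rule sum_residues_Cauchy_kernel)
    show "(\<lambda>\<omega>. c / hpoly n w k \<omega>) holomorphic_on - w ` {1..n}"
      using hpoly_nonzero by (intro holomorphic_intros) auto
    show "((\<lambda>\<omega>. c / hpoly n w k \<omega>) \<longlongrightarrow> 0) at_infinity"
      using tendsto_mult_right_zero[OF tendsto_inverse_hpoly_at_infinity[OF assms(1,3)]]
      by (simp add: divide_inverse)
  qed (use assms(4) in simp_all)
  finally show ?thesis .
qed

theorem theorem1:
  fixes n m :: nat and w :: "nat \<Rightarrow> complex" and k :: "nat \<Rightarrow> nat"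
  assumes "n \<ge> 1"
    and "inj_on w {1..n}"
    and "\<And>i. i \<in> {1..n} \<Longrightarrow> w i \<notin> closed_segment 0 1"
    and "\<And>i. i \<in> {1..n} \<Longrightarrow> k i \<ge> 1"
  shows "integral {0..1} (\<lambda>x::real. (complex_of_real x) ^ m / hpoly n w k (complex_of_real x))
           = (\<Sum>i=1..n. residue (Gfun n w k m) (w i))"
proof -
  have "((\<lambda>z. \<Sum>i=1..n. residue (\<lambda>\<omega>. (z ^ m / hpoly n w k \<omega>) / (z - \<omega>)) (w i))
          has_contour_integral (\<Sum>i=1..n. residue (Gfun n w k m) (w i))) (linepath 0 1)"
    using assms(3) by (intro has_contour_integral_sum residue_Gfun_has_contour_integral) auto
  then have "((\<lambda>z. z ^ m / hpoly n w k z)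
      has_contour_integral (\<Sum>i=1..n. residue (Gfun n w k m) (w i))) (linepath 0 1)"
  proof (rule has_contour_integral_eq)
    fix z :: complex assume "z \<in> path_image (linepath 0 1)"
    then have "z \<notin> w ` {1..n}" using assms(3) by auto
    then show "(\<Sum>i=1..n. residue (\<lambda>\<omega>. (z ^ m / hpoly n w k \<omega>) / (z - \<omega>)) (w i))
        = z ^ m / hpoly n w k z"
      using sum_residues_divide_hpoly[where k = k, OF assms(1,2,4)] by blast
  qed
  then show ?thesis
    unfolding has_contour_integral_linepath
    by (intro integral_unique) (simp add: linepath_def scaleR_conv_of_real)
qed

end
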